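(* Let $\Delta$ be a pure $d$-dimensional APC simplicial complex, $0\le i<d$, let $\Upsilon$ be an $i$-dimensional spanning tree of $\Delta$ with $\tilde H_{i-1}(\Upsilon;\mathbb{Z})=0$, let $\Theta=\Delta_i\setminus\Upsilon_i$, let $L=L_{\Delta,i}$, and let $\tilde L$ be the submatrix of $L$ with rows and columns indexed by $\Theta$, with entries $\ell_{\theta\sigma}$ defined by $\tilde L\theta=\sum_{\sigma\in\Theta}\ell_{\theta\sigma}\sigma$ for $\theta\in\Theta$. Let $\hat\theta$ ($\theta\in\Theta$) be as follows: choose integers $c_{\sigma\theta}$ ($\sigma\in\Upsilon_i$) with $\partial_{\Delta,i}(\theta)=\sum_{\sigma\in\Upsilon_i}c_{\sigma\theta}\partial_{\Delta,i}(\sigma)$ and set $\hat\theta=\theta-\sum_{\sigma\in\Upsilon_i}c_{\sigma\theta}\sigma$. Then for every $\theta\in\Theta$, $$L\theta=\sum_{\sigma\in\Theta}\ell_{\sigma\theta}\,\hat\sigma.$$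
   Context: For a finite simplicial complex $\Delta$, $\Delta_i$ is its set of $i$-faces, $\Delta_{(i)}$ its $i$-skeleton, $f_i=|\Delta_i|$. $C_i(\Delta;\mathbb{Z})$ is free abelian on the (fixed-orientation) $i$-faces, $\partial_{\Delta,i}$ the simplicial boundary map, $\partial^*_{\Delta,i}$ its transpose, and $L_{\Delta,i}=\partial_{i+1}\partial^*_{i+1}$. $\tilde H$ is reduced homology, $\beta_i=\dim_\mathbb{Q}\tilde H_i(\cdot;\mathbb{Q})$. A pure $d$-dimensional complex is APC if $\tilde H_j(\Delta;\mathbb{Q})=0$ for all $j<d$. For a pure $k$-dimensional complex $\Gamma$, a subcomplex $\Upsilon$ with $\Upsilon_{(k-1)}=\Gamma_{(k-1)}$ is a spanning tree if $\tilde H_k(\Upsilon;\mathbb{Z})=0$, $\tilde H_{k-1}(\Upsilon;\mathbb{Q})=0$, and $f_k(\Upsilon)=f_k(\Gamma)-\beta_k(\Gamma)+\beta_{k-1}(\Gamma)$; an $i$-dimensional spanning tree of $\Delta$ is a spanning tree of $\Delta_{(i)}$. (The existence of the integers $c_{\sigma\theta}$ is guaranteed since $\operatorname{im}\partial_{\Delta,i}=\operatorname{im}\partial_{\Upsilon,i}$ under these hypotheses.) *)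

theory Defs
  imports Complex_Main "HOL-Library.Function_Algebras"
begin

text \<open>Vertices carry a linear order; a simplex is a finite set of vertices,
oriented by the increasing order of its vertices.  A simplicial complex contains the empty
face, which serves as the unique (-1)-face, so the chain complex below is the augmented one
and its homology is reduced homology.  Faces are indexed by their cardinality:
cfaces X n is the set of (n-1)-dimensional faces.\<close>

definition simplicial_complex :: "'v set set \<Rightarrow> bool" where
  "simplicial_complex X \<longleftrightarrow> finite X \<and> X \<noteq> {} \<and> (\<forall>\<sigma>\<in>X. finite \<sigma>) \<and>
     (\<forall>\<sigma>\<in>X. \<forall>\<tau>. \<tau> \<subseteq> \<sigma> \<longrightarrow> \<tau> \<in> X)"

definition cfaces :: "'v set set \<Rightarrow> nat \<Rightarrow> 'v set set" where
  "cfaces X n = {\<sigma>\<in>X. card \<sigma> = n}"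

definition skel :: "'v set set \<Rightarrow> nat \<Rightarrow> 'v set set" where
  "skel X i = {\<sigma>\<in>X. card \<sigma> \<le> i + 1}"

definition pure :: "'v set set \<Rightarrow> nat \<Rightarrow> bool" where
  "pure X d \<longleftrightarrow> (\<forall>\<sigma>\<in>X. card \<sigma> \<le> d + 1) \<and> (\<forall>\<sigma>\<in>X. \<exists>\<tau>\<in>X. \<sigma> \<subseteq> \<tau> \<and> card \<tau> = d + 1)"

text \<open>incidence number [sigma : tau] for the ordered orientation:
  d[v_0,...,v_k] = sum_j (-1)^j [v_0,...,omit v_j,...,v_k]\<close>
definition incid :: "'v::linorder set \<Rightarrow> 'v set \<Rightarrow> 'a::comm_ring_1" where
  "incid \<sigma> \<tau> = (if \<tau> \<subseteq> \<sigma> \<and> card (\<sigma> - \<tau>) = 1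
      then (- 1) ^ card {w\<in>\<sigma>. w < the_elem (\<sigma> - \<tau>)} else 0)"

definition chains :: "'a itself \<Rightarrow> 'v set set \<Rightarrow> nat \<Rightarrow> ('v set \<Rightarrow> 'a::zero) set" where
  "chains R X n = {c. \<forall>\<sigma>. c \<sigma> \<noteq> 0 \<longrightarrow> \<sigma> \<in> cfaces X n}"

definition elem :: "'v set \<Rightarrow> 'v set \<Rightarrow> 'a::{zero,one}" where
  "elem \<theta> = (\<lambda>\<tau>. if \<tau> = \<theta> then 1 else 0)"

definition csmult :: "'a::times \<Rightarrow> ('v set \<Rightarrow> 'a) \<Rightarrow> 'v set \<Rightarrow> 'a" where
  "csmult r c = (\<lambda>\<tau>. r * c \<tau>)"

definition bdry :: "'v::linorder set set \<Rightarrow> nat \<Rightarrow> ('v set \<Rightarrow> 'a::comm_ring_1) \<Rightarrow> 'v set \<Rightarrow> 'a" where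
  "bdry X n c = (\<lambda>\<tau>. if \<tau> \<in> cfaces X n then (\<Sum>\<sigma>\<in>cfaces X (Suc n). c \<sigma> * incid \<sigma> \<tau>) else 0)"

definition cobdry :: "'v::linorder set set \<Rightarrow> nat \<Rightarrow> ('v set \<Rightarrow> 'a::comm_ring_1) \<Rightarrow> 'v set \<Rightarrow> 'a" where
  "cobdry X n c = (\<lambda>\<rho>. if \<rho> \<in> cfaces X (Suc n) then (\<Sum>\<tau>\<in>cfaces X n. incid \<rho> \<tau> * c \<tau>) else 0)"

definition laplace :: "'v::linorder set set \<Rightarrow> nat \<Rightarrow> ('v set \<Rightarrow> 'a::comm_ring_1) \<Rightarrow> 'v set \<Rightarrow> 'a" where
  "laplace X i c = bdry X (Suc i) (cobdry X (Suc i) c)"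

definition cycles :: "'a itself \<Rightarrow> 'v::linorder set set \<Rightarrow> nat \<Rightarrow> ('v set \<Rightarrow> 'a::comm_ring_1) set" where
  "cycles R X n = {c \<in> chains R X n. n = 0 \<or> bdry X (n - 1) c = 0}"

definition bnds :: "'a itself \<Rightarrow> 'v::linorder set set \<Rightarrow> nat \<Rightarrow> ('v set \<Rightarrow> 'a::comm_ring_1) set" where
  "bnds R X n = bdry X n ` chains R X (Suc n)"

text \<open>reduced homology with coefficients 'a in dimension n-1 vanishes\<close>
definition hvan :: "'a::comm_ring_1 itself \<Rightarrow> 'v::linorder set set \<Rightarrow> nat \<Rightarrow> bool" where
  "hvan R X n \<longleftrightarrow> cycles R X n \<subseteq> bnds R X n"

definition betti :: "'v::linorder set set \<Rightarrow> nat \<Rightarrow> int" where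
  "betti X n = int (vector_space.dim (\<lambda>(r::rat) f x. r * f x) (cycles TYPE(rat) X n))
             - int (vector_space.dim (\<lambda>(r::rat) f x. r * f x) (bnds TYPE(rat) X n))"

text \<open>APC: reduced rational homology vanishes in all dimensions j < d (j = -1,...,d-1)\<close>
definition APC :: "'v::linorder set set \<Rightarrow> nat \<Rightarrow> bool" where
  "APC X d \<longleftrightarrow> pure X d \<and> (\<forall>n\<le>d. hvan TYPE(rat) X n)"

definition spanning_tree :: "'v::linorder set set \<Rightarrow> nat \<Rightarrow> 'v set set \<Rightarrow> bool" where
  "spanning_tree G k U \<longleftrightarrow> pure G k \<and> simplicial_complex U \<and> U \<subseteq> G \<and>
     {\<sigma>\<in>U. card \<sigma> \<le> k} = {\<sigma>\<in>G. card \<sigma> \<le> k} \<and>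
     hvan TYPE(int) U (Suc k) \<and> hvan TYPE(rat) U k \<and>
     int (card (cfaces U (Suc k))) = int (card (cfaces G (Suc k))) - betti G (Suc k) + betti G k"

end

theory Submission
  imports Defs
begin

(* Fix theta in Theta and put
   x = L theta and y = sum_{sigma in Theta} l_{sigma theta} hat sigma, where by symmetry of L
   the coefficient l_{sigma theta} is the sigma-coordinate of x.
   (1) x is a cycle because boundary o boundary = 0, and every hat sigma is a cycle by the
       choice of the c's; so x - y is an i-cycle of Delta.
   (2) x and y have the same coordinates on Theta, so x - y is supported on Upsilon_i and is
       therefore an i-cycle of Upsilon.
   (3) Upsilon lies in the i-skeleton, so it has no (i+1)-faces and its only i-boundary is 0;
       since H_i(Upsilon; Z) = 0 every i-cycle of Upsilon vanishes.  Hence x = y.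
   Only the facts that Upsilon is a subcomplex of the i-skeleton with H_i(Upsilon; Z) = 0 are
   used. *)

lemma sum_chain_apply: "(sum f A :: 'b \<Rightarrow> 'c::comm_monoid_add) x = (\<Sum>a\<in>A. f a x)"
  by (induction A rule: infinite_finite_induct) auto

lemma csmult_apply: "csmult r c t = r * c t"
  by (simp add: csmult_def)

lemma sum_times_delta:
  assumes "finite A"
  shows "(\<Sum>\<tau>\<in>A. f \<tau> * (if \<tau> = s then 1 else 0)) = (if s \<in> A then f s else (0::'a::comm_ring_1))"
proof -
  have "(\<Sum>\<tau>\<in>A. f \<tau> * (if \<tau> = s then 1 else 0)) = (\<Sum>\<tau>\<in>A. if \<tau> = s then f \<tau> else 0)"
    by (rule sum.cong) auto
  then show ?thesis using assms by (simp add: sum.delta)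
qed

lemma incid_nonzero_facet:
  assumes "incid \<sigma> \<tau> \<noteq> (0::'a::comm_ring_1)"
  shows "\<tau> \<subseteq> \<sigma> \<and> (\<exists>x. \<sigma> - \<tau> = {x})"
  using assms unfolding incid_def by (auto split: if_splits simp: card_1_singleton_iff)

lemma incid_remove:
  assumes "finite \<rho>" "a \<in> \<rho>"
  shows "incid \<rho> (\<rho> - {a}) = ((- 1) ^ card {w\<in>\<rho>. w < a} :: 'a::comm_ring_1)"
proof -
  have "\<rho> - (\<rho> - {a}) = {a}" using assms by auto
  then show ?thesis by (simp add: incid_def)
qed

text \<open>The two ways of removing two vertices a < b from rho carry opposite signs: removing a
  first does not change the position of b by one, removing b first does not move a.\<close>
lemma incid_two_paths_cancel:
  fixes \<rho> :: "'v::linorder set"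
  assumes fin: "finite \<rho>" and ab: "a \<in> \<rho>" "b \<in> \<rho>" "a < b"
  shows "incid \<rho> (\<rho> - {a}) * incid (\<rho> - {a}) (\<rho> - {a, b})
       + incid \<rho> (\<rho> - {b}) * incid (\<rho> - {b}) (\<rho> - {a, b}) = (0::'a::comm_ring_1)"
proof -
  have rho_a: "incid \<rho> (\<rho> - {a}) = ((- 1) ^ card {w\<in>\<rho>. w < a} :: 'a)"
   and rho_b: "incid \<rho> (\<rho> - {b}) = ((- 1) ^ card {w\<in>\<rho>. w < b} :: 'a)"
    using fin ab by (simp_all add: incid_remove)
  have "\<rho> - {a, b} = (\<rho> - {a}) - {b}" by auto
  then have a_b: "incid (\<rho> - {a}) (\<rho> - {a, b}) = ((- 1) ^ card {w\<in>\<rho> - {a}. w < b} :: 'a)"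
    using fin ab by (simp add: incid_remove)
  have "\<rho> - {a, b} = (\<rho> - {b}) - {a}" by auto
  then have b_a: "incid (\<rho> - {b}) (\<rho> - {a, b}) = ((- 1) ^ card {w\<in>\<rho> - {b}. w < a} :: 'a)"
    using fin ab by (simp add: incid_remove)
  have below_b: "card {w\<in>\<rho> - {a}. w < b} + 1 = card {w\<in>\<rho>. w < b}"
  proof -
    have "{w\<in>\<rho>. w < b} = insert a {w\<in>\<rho> - {a}. w < b}" using ab by auto
    then show ?thesis using fin by simp
  qed
  have below_a: "{w\<in>\<rho> - {b}. w < a} = {w\<in>\<rho>. w < a}" using ab by auto
  show ?thesis
    unfolding rho_a rho_b a_b b_a below_a below_b[symmetric] by (simp add: power_add)
qed

lemma incid_incid_sum_zero:
  fixes \<rho> \<tau> :: "'v::linorder set"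
  assumes X: "simplicial_complex X" and \<rho>: "\<rho> \<in> X" "card \<rho> = Suc (Suc n)"
    and \<tau>: "card \<tau> = n"
  shows "(\<Sum>\<sigma>\<in>cfaces X (Suc n). incid \<rho> \<sigma> * incid \<sigma> \<tau>) = (0::'a::comm_ring_1)"
proof (cases "\<tau> \<subseteq> \<rho>")
  case False
  then have "incid \<rho> \<sigma> * incid \<sigma> \<tau> = (0::'a)" for \<sigma>
    using incid_nonzero_facet by (metis mult_not_zero order_trans)
  then show ?thesis by simp
next
  case True
  have fin: "finite \<rho>" using \<rho> by (metis card.infinite nat.distinct(1))
  moreover have "finite \<tau>" using True fin finite_subset by blast
  ultimately have "card (\<rho> - \<tau>) = 2" using True \<rho> \<tau> by (simp add: card_Diff_subset)
  then obtain a b where ab: "\<rho> - \<tau> = {a, b}" "a < b"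
    by (auto simp: card_2_iff) (metis insert_commute linorder_neqE)
  then have \<tau>_eq: "\<tau> = \<rho> - {a, b}" and ab_in: "a \<in> \<rho>" "b \<in> \<rho>" using True by auto
  have facets: "\<rho> - {a} \<in> cfaces X (Suc n)" "\<rho> - {b} \<in> cfaces X (Suc n)"
    using X \<rho> ab_in fin unfolding cfaces_def simplicial_complex_def by auto
  have others: "incid \<rho> \<sigma> * incid \<sigma> \<tau> = (0::'a)" if "\<sigma> \<notin> {\<rho> - {a}, \<rho> - {b}}" for \<sigma>
  proof (rule ccontr)
    assume "incid \<rho> \<sigma> * incid \<sigma> \<tau> \<noteq> (0::'a)"
    then obtain x where "\<sigma> \<subseteq> \<rho>" "\<rho> - \<sigma> = {x}" "\<tau> \<subseteq> \<sigma>" "\<sigma> - \<tau> \<noteq> {}"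
      using incid_nonzero_facet by (metis insert_not_empty mult_not_zero)
    then have "\<sigma> = \<rho> - {x}" "x \<in> {a, b}" using ab by auto
    then show False using that by auto
  qed
  have "(\<Sum>\<sigma>\<in>cfaces X (Suc n). incid \<rho> \<sigma> * incid \<sigma> \<tau>)
      = (\<Sum>\<sigma>\<in>{\<rho> - {a}, \<rho> - {b}}. incid \<rho> \<sigma> * incid \<sigma> \<tau> :: 'a)"
    using X facets others
    by (intro sum.mono_neutral_right) (auto simp: simplicial_complex_def cfaces_def)
  also have "\<dots> = 0"
  proof -
    have "\<rho> - {a} \<noteq> \<rho> - {b}" using ab ab_in by auto
    then show ?thesis using incid_two_paths_cancel[OF fin ab_in ab(2)] by (simp add: \<tau>_eq)
  qed
  finally show ?thesis .
qed

lemma bdry_bdry: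
  assumes X: "simplicial_complex X"
  shows "bdry X n (bdry X (Suc n) z) = (0 :: 'v::linorder set \<Rightarrow> 'a::comm_ring_1)"
proof
  fix \<tau>
  show "bdry X n (bdry X (Suc n) z) \<tau> = 0 \<tau>"
  proof (cases "\<tau> \<in> cfaces X n")
    case True
    have "bdry X n (bdry X (Suc n) z) \<tau>
        = (\<Sum>\<sigma>\<in>cfaces X (Suc n). \<Sum>\<rho>\<in>cfaces X (Suc (Suc n)). z \<rho> * (incid \<rho> \<sigma> * incid \<sigma> \<tau>))"
      using True by (simp add: bdry_def sum_distrib_right mult.assoc)
    also have "\<dots> = (\<Sum>\<rho>\<in>cfaces X (Suc (Suc n)).
                       z \<rho> * (\<Sum>\<sigma>\<in>cfaces X (Suc n). incid \<rho> \<sigma> * incid \<sigma> \<tau>))"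
      by (subst sum.swap) (simp add: sum_distrib_left)
    also have "\<dots> = 0"
    proof (intro sum.neutral ballI)
      fix \<rho> assume "\<rho> \<in> cfaces X (Suc (Suc n))"
      then have "(\<Sum>\<sigma>\<in>cfaces X (Suc n). incid \<rho> \<sigma> * incid \<sigma> \<tau>) = (0::'a)"
        using True by (intro incid_incid_sum_zero[OF X]) (auto simp: cfaces_def)
      then show "z \<rho> * (\<Sum>\<sigma>\<in>cfaces X (Suc n). incid \<rho> \<sigma> * incid \<sigma> \<tau>) = 0" by simp
    qed
    finally show ?thesis by simp
  qed (simp add: bdry_def)
qed

lemma bdry_sum: "bdry X n (\<Sum>a\<in>A. f a) = (\<Sum>a\<in>A. bdry X n (f a) :: 'v::linorder set \<Rightarrow> 'a::comm_ring_1)"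
  by (auto simp: fun_eq_iff bdry_def sum_chain_apply sum_distrib_right intro: sum.swap)

lemma bdry_diff: "bdry X n (f - g) = (bdry X n f - bdry X n g :: 'v::linorder set \<Rightarrow> 'a::comm_ring_1)"
  by (auto simp: bdry_def fun_eq_iff sum_subtractf left_diff_distrib)

lemma bdry_csmult: "bdry X n (csmult r f) = (csmult r (bdry X n f) :: 'v::linorder set \<Rightarrow> 'a::comm_ring_1)"
  by (auto simp: bdry_def fun_eq_iff csmult_def sum_distrib_left mult.assoc)

lemma bdry_combination_of_cycles:
  assumes "\<And>\<sigma>. \<sigma> \<in> A \<Longrightarrow> bdry X n (f \<sigma>) = 0"
  shows "bdry X n (\<Sum>\<sigma>\<in>A. csmult (a \<sigma>) (f \<sigma>)) = (0 :: 'v::linorder set \<Rightarrow> 'a::comm_ring_1)"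
proof -
  have "bdry X n (\<Sum>\<sigma>\<in>A. csmult (a \<sigma>) (f \<sigma>)) = (\<Sum>\<sigma>\<in>A. csmult (a \<sigma>) 0)"
    using assms by (simp add: bdry_sum bdry_csmult)
  also have "\<dots> = 0" by (rule sum.neutral) (simp add: csmult_def fun_eq_iff)
  finally show ?thesis .
qed

text \<open>The matrix of L = d d^* is symmetric: its (theta, sigma) entry is the sum over
  (i+1)-faces rho of [rho : sigma][rho : theta].\<close>
lemma laplace_elem_symmetric:
  assumes "finite (cfaces X (Suc i))" "\<sigma> \<in> cfaces X (Suc i)" "\<theta> \<in> cfaces X (Suc i)"
  shows "laplace X i (elem \<sigma>) \<theta> = (laplace X i (elem \<theta>) \<sigma> :: 'a::comm_ring_1)"
  using assms by (simp add: laplace_def bdry_def cobdry_def elem_def sum_times_delta mult.commute)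

lemma bdry_restrict:
  assumes UX: "U \<subseteq> X" and fin: "finite (cfaces X (Suc k))"
    and supp: "\<And>\<tau>. \<tau> \<notin> cfaces U (Suc k) \<Longrightarrow> z \<tau> = 0"
    and \<tau>: "\<tau> \<in> cfaces U k"
  shows "bdry U k z \<tau> = (bdry X k z \<tau> :: 'a::comm_ring_1)"
proof -
  have sub: "cfaces U n \<subseteq> cfaces X n" for n using UX by (auto simp: cfaces_def)
  have "(\<Sum>\<sigma>\<in>cfaces U (Suc k). z \<sigma> * incid \<sigma> \<tau>) = (\<Sum>\<sigma>\<in>cfaces X (Suc k). z \<sigma> * incid \<sigma> \<tau>)"
    using fin sub supp by (intro sum.mono_neutral_left) auto
  then show ?thesis using \<tau> sub by (auto simp: bdry_def)
qed

text \<open>If U has no faces of cardinality k+2, its only k-boundary is 0; if moreover H_{k}(U)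
  vanishes, then every cycle of X supported on the k-faces of U is zero.\<close>
lemma supported_cycle_vanishes:
  assumes UX: "U \<subseteq> X" and fin: "finite (cfaces X (Suc k))"
    and no_faces: "cfaces U (Suc (Suc k)) = {}"
    and acyclic: "hvan TYPE('a::comm_ring_1) U (Suc k)"
    and cycle: "bdry X k z = 0"
    and supp: "\<And>\<tau>. \<tau> \<notin> cfaces U (Suc k) \<Longrightarrow> z \<tau> = 0"
  shows "z = (0 :: 'v::linorder set \<Rightarrow> 'a)"
proof -
  have "bdry U k z = 0"
    using bdry_restrict[OF UX fin supp] cycle by (auto simp: fun_eq_iff bdry_def)
  then have "z \<in> cycles TYPE('a) U (Suc k)"
    using supp by (auto simp: cycles_def chains_def)
  then obtain w where "z = bdry U (Suc k) w"
    using acyclic by (auto simp: hvan_def bnds_def)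
  then show ?thesis using no_faces by (simp add: bdry_def fun_eq_iff)
qed

definition hat :: "('v set \<Rightarrow> 'v set \<Rightarrow> 'a::comm_ring_1) \<Rightarrow> 'v set set \<Rightarrow> nat \<Rightarrow> 'v set \<Rightarrow> 'v set \<Rightarrow> 'a"
  where "hat c U n \<sigma> = elem \<sigma> - (\<Sum>\<rho>\<in>cfaces U n. csmult (c \<rho> \<sigma>) (elem \<rho>))"

lemma bdry_hat:
  assumes "bdry X k (elem \<sigma>) = (\<Sum>\<rho>\<in>cfaces U (Suc k). csmult (c \<rho> \<sigma>) (bdry X k (elem \<rho>)))"
  shows "bdry X k (hat c U (Suc k) \<sigma>) = (0 :: 'v::linorder set \<Rightarrow> 'a::comm_ring_1)"
  using assms by (simp add: hat_def bdry_diff bdry_sum bdry_csmult)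

text \<open>Off the faces of U, hat sigma is just the elementary chain of sigma; so a chain x
  supported on the n-faces of X agrees with the combination of the hat sigma (sigma not in
  U) weighted by its own coordinates, except on the n-faces of U.\<close>
lemma hat_expansion_off_U:
  assumes fin: "finite (cfaces X n)"
    and supp: "\<And>\<tau>. \<tau> \<notin> cfaces X n \<Longrightarrow> x \<tau> = 0"
    and \<tau>: "\<tau> \<notin> cfaces U n"
  shows "(\<Sum>\<sigma>\<in>cfaces X n - cfaces U n. csmult (x \<sigma>) (hat c U n \<sigma>)) \<tau> = (x \<tau> :: 'a::comm_ring_1)"
proof -
  have "(\<Sum>\<rho>\<in>cfaces U n. csmult (c \<rho> \<sigma>) (elem \<rho>)) \<tau> = 0" for \<sigma>
    using \<tau> by (auto simp: sum_chain_apply csmult_apply elem_def intro!: sum.neutral)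
  then have "hat c U n \<sigma> \<tau> = (if \<sigma> = \<tau> then 1 else 0)" for \<sigma>
    by (auto simp: hat_def elem_def)
  then have "(\<Sum>\<sigma>\<in>cfaces X n - cfaces U n. csmult (x \<sigma>) (hat c U n \<sigma>)) \<tau>
           = (if \<tau> \<in> cfaces X n - cfaces U n then x \<tau> else 0)"
    using fin by (simp add: sum_chain_apply csmult_apply sum_times_delta)
  then show ?thesis using \<tau> supp by auto
qed

theorem claim6:
  fixes \<Delta> \<Upsilon> :: "'v::linorder set set" and d i :: nat
    and c :: "'v set \<Rightarrow> 'v set \<Rightarrow> int"
  assumes "simplicial_complex \<Delta>" and "APC \<Delta> d" and "i < d"
    and "spanning_tree (skel \<Delta> i) i \<Upsilon>"
    and "hvan TYPE(int) \<Upsilon> i"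
    and "\<forall>\<theta>\<in>cfaces \<Delta> (Suc i) - cfaces \<Upsilon> (Suc i).
           bdry \<Delta> i (elem \<theta> :: 'v set \<Rightarrow> int)
             = (\<Sum>\<sigma>\<in>cfaces \<Upsilon> (Suc i). csmult (c \<sigma> \<theta>) (bdry \<Delta> i (elem \<sigma>)))"
  shows "\<forall>\<theta>\<in>cfaces \<Delta> (Suc i) - cfaces \<Upsilon> (Suc i).
           laplace \<Delta> i (elem \<theta> :: 'v set \<Rightarrow> int)
             = (\<Sum>\<sigma>\<in>cfaces \<Delta> (Suc i) - cfaces \<Upsilon> (Suc i).
                  csmult (laplace \<Delta> i (elem \<sigma>) \<theta>)
                    (elem \<sigma> - (\<Sum>\<rho>\<in>cfaces \<Upsilon> (Suc i). csmult (c \<rho> \<sigma>) (elem \<rho>))))"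
proof
  fix \<theta> assume \<theta>: "\<theta> \<in> cfaces \<Delta> (Suc i) - cfaces \<Upsilon> (Suc i)"
  let ?\<Theta> = "cfaces \<Delta> (Suc i) - cfaces \<Upsilon> (Suc i)"
  define x :: "'v set \<Rightarrow> int" where "x = laplace \<Delta> i (elem \<theta>)"
  define y where "y = (\<Sum>\<sigma>\<in>?\<Theta>. csmult (x \<sigma>) (hat c \<Upsilon> (Suc i) \<sigma>))"
  have \<Upsilon>_skel: "\<Upsilon> \<subseteq> skel \<Delta> i" and \<Upsilon>_acyclic: "hvan TYPE(int) \<Upsilon> (Suc i)"
    using assms(4) by (auto simp: spanning_tree_def)
  have fin: "finite (cfaces \<Delta> (Suc i))"
    using assms(1) by (auto simp: simplicial_complex_def cfaces_def)
  have x_supp: "x \<tau> = 0" if "\<tau> \<notin> cfaces \<Delta> (Suc i)" for \<tau>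
    using that by (simp add: x_def laplace_def bdry_def)
  have "x - y = 0"
  proof (rule supported_cycle_vanishes)
    show "\<Upsilon> \<subseteq> \<Delta>" "cfaces \<Upsilon> (Suc (Suc i)) = {}"
      using \<Upsilon>_skel by (auto simp: skel_def cfaces_def)
    have "bdry \<Delta> i (hat c \<Upsilon> (Suc i) \<sigma>) = 0" if "\<sigma> \<in> ?\<Theta>" for \<sigma>
      using assms(6) that by (intro bdry_hat) auto
    then have "bdry \<Delta> i y = 0"
      unfolding y_def by (rule bdry_combination_of_cycles)
    moreover have "bdry \<Delta> i x = 0"
      by (simp add: x_def laplace_def bdry_bdry[OF assms(1)])
    ultimately show "bdry \<Delta> i (x - y) = 0" by (simp add: bdry_diff)
    show "(x - y) \<tau> = 0" if "\<tau> \<notin> cfaces \<Upsilon> (Suc i)" for \<tau>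
      using hat_expansion_off_U[OF fin x_supp that] by (simp add: y_def)
  qed (use fin \<Upsilon>_acyclic in auto)
  moreover have "laplace \<Delta> i (elem \<sigma>) \<theta> = x \<sigma>" if "\<sigma> \<in> ?\<Theta>" for \<sigma>
    using that \<theta> fin by (simp add: x_def laplace_elem_symmetric)
  ultimately show "laplace \<Delta> i (elem \<theta>) = (\<Sum>\<sigma>\<in>?\<Theta>. csmult (laplace \<Delta> i (elem \<sigma>) \<theta>)
                    (elem \<sigma> - (\<Sum>\<rho>\<in>cfaces \<Upsilon> (Suc i). csmult (c \<rho> \<sigma>) (elem \<rho>))))"
    by (simp add: x_def y_def hat_def)
qed

end
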